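(* Let $l\ge0$ be an integer and $r$ a real number with $\frac{l}{2l+1}<r<\frac12$, and put $\delta=r-\frac{l}{2l+1}$. If $X\subseteq S^1$ is a finite subset with $\mathrm{wf}_{<}(X;r)>\frac{l}{2l+1}$, then $X$ is an $\big((l+\frac12)\delta\big)$-covering of $S^1$.
   Context: $S^1$ is the circle of circumference $1$ with arc-length metric; $\vec d(x,y)$ is the clockwise distance from $x$ to $y$. $X$ is an $\varepsilon$-covering of $S^1$ if every point of $S^1$ is at distance less than $\varepsilon$ from some point of $X$. For finite $X$ and $0<r<\frac12$, $\overrightarrow{\mathbf{VR}}_{<}(X;r)$ is the directed graph on $X$ with $x_1\to x_2$ iff $0<\vec d(x_1,x_2)<r$ (a cyclic graph with the clockwise order), and $\mathrm{wf}_{<}(X;r)=\sup\{k/n:\exists$ cyclic homomorphism $\overrightarrow{C_n^k}\to\overrightarrow{\mathbf{VR}}_{<}(X;r)\}$, where $\overrightarrow{C_n^k}$ ($0\le k<n/2$) has vertices $\{0,\dots,n-1\}$ with $i\to j$ iff $0<(j-i)\bmod n\le k$, and a cyclic homomorphism is a vertex map sending each directed edge to a directed edge or a single vertex, whose fibres are sets of cyclically consecutive vertices, that reflects cyclic betweenness ($f(s)\prec f(s')\prec f(s'')$ implies $s\prec s'\prec s''$), and that is non-constant if the source has a directed cycle. *)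

theory Defs
  imports Complex_Main
begin

text \<open>The circle S^1 of circumference 1 is modelled as the interval [0,1) (reals mod 1).\<close>

definition S1 :: "real set" where
  "S1 = {0..<1}"

definition cw_dist :: "real \<Rightarrow> real \<Rightarrow> real" where
  "cw_dist x y = frac (y - x)"

definition arc_dist :: "real \<Rightarrow> real \<Rightarrow> real" where
  "arc_dist x y = min (cw_dist x y) (cw_dist y x)"

definition is_covering :: "real set \<Rightarrow> real \<Rightarrow> bool" where
  "is_covering X \<epsilon> \<longleftrightarrow> (\<forall>p\<in>S1. \<exists>x\<in>X. arc_dist p x < \<epsilon>)"

definition vr_edge :: "real \<Rightarrow> real \<Rightarrow> real \<Rightarrow> bool" where
  "vr_edge r x y \<longleftrightarrow> 0 < cw_dist x y \<and> cw_dist x y < r"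

definition between_S1 :: "real \<Rightarrow> real \<Rightarrow> real \<Rightarrow> bool" where
  "between_S1 x y z \<longleftrightarrow> 0 < cw_dist x y \<and> cw_dist x y < cw_dist x z"

definition cw_dist_n :: "nat \<Rightarrow> nat \<Rightarrow> nat \<Rightarrow> nat" where
  "cw_dist_n n i j = (j + n - i) mod n"

definition Cnk_edge :: "nat \<Rightarrow> nat \<Rightarrow> nat \<Rightarrow> nat \<Rightarrow> bool" where
  "Cnk_edge n k i j \<longleftrightarrow> 0 < cw_dist_n n i j \<and> cw_dist_n n i j \<le> k"

definition between_n :: "nat \<Rightarrow> nat \<Rightarrow> nat \<Rightarrow> nat \<Rightarrow> bool" where
  "between_n n s s' s'' \<longleftrightarrow> 0 < cw_dist_n n s s' \<and> cw_dist_n n s s' < cw_dist_n n s s''"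

definition cyc_consecutive :: "nat \<Rightarrow> nat set \<Rightarrow> bool" where
  "cyc_consecutive n A \<longleftrightarrow> (\<exists>a m. A = {(a + i) mod n | i. i < m})"

text \<open>Cyclic homomorphism C_n^k \<rightarrow> VR_<(X;r). C_n^k (with k < n/2) has a directed
  cycle iff k \<ge> 1, so the non-constancy requirement applies exactly when k > 0.\<close>
definition cyclic_hom :: "nat \<Rightarrow> nat \<Rightarrow> real set \<Rightarrow> real \<Rightarrow> (nat \<Rightarrow> real) \<Rightarrow> bool" where
  "cyclic_hom n k X r f \<longleftrightarrow>
     (\<forall>i<n. f i \<in> X) \<and>
     (\<forall>i<n. \<forall>j<n. Cnk_edge n k i j \<longrightarrow> f i = f j \<or> vr_edge r (f i) (f j)) \<and>
     (\<forall>x\<in>X. cyc_consecutive n {i. i < n \<and> f i = x}) \<and>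
     (\<forall>s<n. \<forall>s'<n. \<forall>s''<n. between_S1 (f s) (f s') (f s'') \<longrightarrow> between_n n s s' s'') \<and>
     (0 < k \<longrightarrow> (\<exists>i<n. \<exists>j<n. f i \<noteq> f j))"

definition wf_ratios :: "real set \<Rightarrow> real \<Rightarrow> real set" where
  "wf_ratios X r = {real k / real n | k n. 0 < n \<and> 2 * k < n \<and> (\<exists>f. cyclic_hom n k X r f)}"

text \<open>Winding fraction; convention: 0 if no homomorphism exists (only when X is empty).\<close>
definition wf_lt :: "real set \<Rightarrow> real \<Rightarrow> real" where
  "wf_lt X r = (if wf_ratios X r = {} then 0 else Sup (wf_ratios X r))"

end

theory Submission
  imports Defs
begin

text \<open>A cyclic homomorphism \<open>f : C_n^k \<rightarrow> VR_<(X;r)\<close> with \<open>k > 0\<close> and \<open>r < 1/2\<close>, started at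
  the beginning of the fibre of its smallest value, is monotone on \<open>0..n-1\<close>; unrolling it gives a
  monotone lift \<open>G : \<nat> \<rightarrow> \<real>\<close> of winding number one per period \<open>n\<close>, whose values lie over \<open>X\<close>,
  with \<open>G (i + k) - G i < r\<close>. If \<open>k/n > l/(2l+1)\<close>, then \<open>l n < (2l+1) k\<close>, so from any \<open>v\<close> the
  \<open>2l+1\<close> jumps of length \<open>k\<close> overshoot \<open>Suc v\<close> plus \<open>l\<close> full turns; hence every gap
  \<open>G (Suc v) - G v\<close> is below \<open>(2l+1) r - l = 2\<epsilon>\<close> with \<open>\<epsilon> = (l + 1/2)\<delta>\<close>. A point at distance
  at least \<open>\<epsilon>\<close> from \<open>X\<close> would sit in such a gap at distance \<open>\<epsilon>\<close> from both ends.\<close>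

lemma cw_dist_n_mod_add:
  assumes "d < n"
  shows "cw_dist_n n (x mod n) ((x + d) mod n) = d"
proof -
  define y where "y = x mod n"
  have "y < n" unfolding y_def using assms by simp
  have "(x + d) mod n = (y + d) mod n" unfolding y_def by (simp add: mod_add_left_eq)
  moreover have "((y + d) mod n + n - y) mod n = d"
  proof (cases "y + d < n")
    case True
    then show ?thesis using assms by simp
  next
    case False
    then have "(y + d) mod n = y + d - n" using \<open>y < n\<close> assms by (simp add: mod_if)
    then show ?thesis using assms False by simp
  qed
  ultimately show ?thesis unfolding cw_dist_n_def y_def by simp
qed

lemma cyc_consecutive_mem_between:
  assumes "cyc_consecutive n A" and "0 < n"
    and "c mod n \<in> A" and "(c + (n - 1)) mod n \<notin> A" and "(c + j) mod n \<in> A"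
    and "i \<le> j" and "j < n"
  shows "(c + i) mod n \<in> A"
proof (rule ccontr)
  assume gap: "(c + i) mod n \<notin> A"
  obtain a M where A: "A = {(a + s) mod n | s. s < M}"
    using assms(1) unfolding cyc_consecutive_def by blast
  obtain s1 where s1: "s1 < M" "c mod n = (a + s1) mod n" using assms(3) A by auto
  obtain s2 where s2: "s2 < M" "(c + j) mod n = (a + s2) mod n" using assms(5) A by auto
  have shift: "(c + t) mod n = (a + (s1 + t)) mod n" for t
    by (metis s1(2) add.assoc mod_add_left_eq)
  have "s1 = 0"
  proof (rule ccontr)
    assume "s1 \<noteq> 0"
    have "(c + (n - 1)) mod n = (a + (s1 - 1) + n) mod n"
      using shift[of "n - 1"] \<open>s1 \<noteq> 0\<close> assms(2) by (simp add: algebra_simps)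
    also have "\<dots> = (a + (s1 - 1)) mod n" by simp
    finally show False using assms(4) A s1(1) by auto
  qed
  have "M \<le> i" using shift[of i] gap A \<open>s1 = 0\<close> by (auto simp: not_less)
  then have "s2 < j" using s2(1) assms(6) by simp
  have "(a + s2) mod n = (a + j) mod n" using shift[of j] s2(2) \<open>s1 = 0\<close> by simp
  then have "n dvd j - s2" using mod_eq_dvd_iff_nat[of "a + s2" "a + j" n] \<open>s2 < j\<close> by simp
  then show False using \<open>s2 < j\<close> assms(7) dvd_imp_le[of n "j - s2"] by linarith
qed

lemma exists_arc_start:
  fixes t u n :: nat
  assumes "t < n" and "f t = y" and "u < n" and "f u \<noteq> y"
  shows "\<exists>\<rho><n. f \<rho> = y \<and> f ((\<rho> + (n - 1)) mod n) \<noteq> y"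
proof -
  define P where "P s \<longleftrightarrow> f ((u + s) mod n) = y" for s
  have "u + (t + n - u) = t + n" using assms(3) by linarith
  then have "P (t + n - u)" using assms(1,2) unfolding P_def by simp
  define s where "s = (LEAST s. P s)"
  have "P s" unfolding s_def by (rule LeastI) fact
  have "s \<noteq> 0" using \<open>P s\<close> assms(3,4) unfolding P_def by (cases s) auto
  have "\<not> P (s - 1)"
    using \<open>s \<noteq> 0\<close> not_less_Least[of "s - 1" P] unfolding s_def by simp
  have "((u + s) mod n + (n - 1)) mod n = (u + s + (n - 1)) mod n"
    by (rule mod_add_left_eq)
  also have "u + s + (n - 1) = u + (s - 1) + n" using \<open>s \<noteq> 0\<close> assms(3) by simp
  finally have "((u + s) mod n + (n - 1)) mod n = (u + (s - 1)) mod n" by simp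
  then show ?thesis
    using \<open>P s\<close> \<open>\<not> P (s - 1)\<close> assms(3) unfolding P_def
    by (intro exI[of _ "(u + s) mod n"]) auto
qed

lemma cyclic_hom_exists_arc_start:
  assumes hom: "cyclic_hom n k X r f" and "0 < k" and "0 < n"
  obtains \<rho> where "\<rho> < n" and "\<forall>i<n. f \<rho> \<le> f i" and "f ((\<rho> + (n - 1)) mod n) \<noteq> f \<rho>"
proof -
  define m where "m = Min (f ` {..<n})"
  have m_le: "\<forall>i<n. m \<le> f i" unfolding m_def by simp
  have "m \<in> f ` {..<n}" unfolding m_def using \<open>0 < n\<close> by (intro Min_in) auto
  then obtain t where "t < n" "f t = m" by auto
  obtain i j where "i < n" "j < n" "f i \<noteq> f j" using hom \<open>0 < k\<close> unfolding cyclic_hom_def by blast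
  then obtain u where "u < n" "f u \<noteq> m" by metis
  from exists_arc_start[OF \<open>t < n\<close> \<open>f t = m\<close> \<open>u < n\<close> \<open>f u \<noteq> m\<close>] m_le that show ?thesis
    by blast
qed

lemma cyclic_hom_frac_diff_lt:
  assumes hom: "cyclic_hom n k X r f" and "2 * k < n" and "0 < r" and "1 \<le> d" and "d \<le> k"
  shows "frac (f ((x + d) mod n) - f (x mod n)) < r"
proof -
  have "d < n" using assms(2,5) by simp
  then have "Cnk_edge n k (x mod n) ((x + d) mod n)"
    using cw_dist_n_mod_add[of d n x] assms(4,5) unfolding Cnk_edge_def by simp
  then have "f (x mod n) = f ((x + d) mod n) \<or> vr_edge r (f (x mod n)) (f ((x + d) mod n))"
    using hom \<open>d < n\<close> unfolding cyclic_hom_def by simp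
  then show ?thesis using \<open>0 < r\<close> unfolding vr_edge_def cw_dist_def by auto
qed

lemma between_S1_iff_less:
  assumes "x \<in> S1" "y \<in> S1" "z \<in> S1" "x \<le> y" "x \<le> z"
  shows "between_S1 x y z \<longleftrightarrow> x < y \<and> y < z"
  using assms unfolding between_S1_def cw_dist_def S1_def by (auto simp: frac_eq)

text \<open>A descent \<open>g j < g i\<close> (with \<open>i < j\<close>) either orders \<open>f \<rho>, g j, g i\<close> on the circle against the
  order of their indices, or, when \<open>g j = f \<rho>\<close>, makes the fibre of \<open>f \<rho>\<close> leave the arc starting
  at \<open>\<rho>\<close> and come back.\<close>

lemma cyclic_hom_mono_from_arc_start:
  assumes hom: "cyclic_hom n k X r f" and "X \<subseteq> S1" and "\<rho> < n"
    and min: "\<forall>i<n. f \<rho> \<le> f i" and start: "f ((\<rho> + (n - 1)) mod n) \<noteq> f \<rho>"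
    and "i \<le> j" and "j < n"
  shows "f ((\<rho> + i) mod n) \<le> f ((\<rho> + j) mod n)"
proof (rule ccontr)
  define g where "g t = f ((\<rho> + t) mod n)" for t
  assume "\<not> ?thesis"
  then have less: "g j < g i" unfolding g_def by simp
  have n: "0 < n" using \<open>\<rho> < n\<close> by simp
  have gS1: "g t \<in> S1" for t
    using hom \<open>X \<subseteq> S1\<close> n unfolding cyclic_hom_def g_def by auto
  have gmin: "f \<rho> \<le> g t" for t using min n unfolding g_def by simp
  have "g 0 = f \<rho>" using \<open>\<rho> < n\<close> unfolding g_def by simp
  show False
  proof (cases "g j = f \<rho>")
    case False
    then have "between_S1 (g 0) (g j) (g i)"
      using between_S1_iff_less[OF gS1 gS1 gS1, of 0 j i] less gmin[of j] gmin[of i] \<open>g 0 = f \<rho>\<close>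
      by (simp add: order_less_le)
    then have "between_n n \<rho> ((\<rho> + j) mod n) ((\<rho> + i) mod n)"
      using hom \<open>\<rho> < n\<close> \<open>g 0 = f \<rho>\<close> unfolding cyclic_hom_def g_def by simp
    then have "j < i"
      using cw_dist_n_mod_add[of j n \<rho>] cw_dist_n_mod_add[of i n \<rho>] \<open>\<rho> < n\<close> \<open>i \<le> j\<close> \<open>j < n\<close>
      unfolding between_n_def by simp
    then show False using \<open>i \<le> j\<close> by simp
  next
    case True
    have "f \<rho> \<in> X" using hom \<open>\<rho> < n\<close> unfolding cyclic_hom_def by simp
    then have "cyc_consecutive n {t. t < n \<and> f t = f \<rho>}"
      using hom unfolding cyclic_hom_def by simp
    then have "(\<rho> + i) mod n \<in> {t. t < n \<and> f t = f \<rho>}"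
      by (rule cyc_consecutive_mem_between[where c = \<rho> and j = j])
        (use n \<open>\<rho> < n\<close> start True \<open>i \<le> j\<close> \<open>j < n\<close> in \<open>auto simp: g_def\<close>)
    then show False using less True unfolding g_def by simp
  qed
qed

definition unroll :: "nat \<Rightarrow> (nat \<Rightarrow> real) \<Rightarrow> nat \<Rightarrow> real" where
  "unroll n g i = g (i mod n) + real (i div n)"

lemma unroll_add_period:
  assumes "0 < n"
  shows "unroll n g (i + n) = unroll n g i + 1"
  using assms unfolding unroll_def by simp

lemma frac_unroll_diff:
  "frac (unroll n g j - unroll n g i) = frac (g (j mod n) - g (i mod n))"
proof -
  have "unroll n g j - unroll n g i
      = (g (j mod n) - g (i mod n)) + (real (j div n) - real (i div n))"
    unfolding unroll_def by simp
  moreover have "real (j div n) - real (i div n) \<in> \<int>" by simp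
  ultimately show ?thesis by (simp add: frac_add_int_right)
qed

lemma unroll_Suc:
  assumes "0 < n" and mono: "\<And>i j. i \<le> j \<Longrightarrow> j < n \<Longrightarrow> g i \<le> g j"
    and range: "\<And>i. i < n \<Longrightarrow> 0 \<le> g i \<and> g i < 1" and "g 0 < g (n - 1)"
  shows "unroll n g i \<le> unroll n g (Suc i) \<and> unroll n g (Suc i) - unroll n g i < 1"
proof (cases "Suc i mod n = 0")
  case True
  then have "i mod n = n - 1" and "Suc i div n = i div n + 1"
    using mod_Suc[of i n] div_Suc[of i n] by (auto split: if_splits)
  then show ?thesis
    using True \<open>g 0 < g (n - 1)\<close> range[of 0] range[of "n - 1"] \<open>0 < n\<close>
    unfolding unroll_def by simp
next
  case False
  then have "Suc i mod n = Suc (i mod n)" and "Suc i div n = i div n"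
    using mod_Suc[of i n] div_Suc[of i n] by (auto split: if_splits)
  moreover have "Suc (i mod n) < n" using calculation(1) \<open>0 < n\<close> by (metis mod_less_divisor)
  ultimately show ?thesis
    using mono[of "i mod n" "Suc (i mod n)"] range[of "i mod n"] range[of "Suc (i mod n)"]
    unfolding unroll_def by simp
qed

lemma nat_crossing:
  fixes G :: "nat \<Rightarrow> real"
  assumes "a < b" and "G a \<le> y" and "y < G b"
  shows "\<exists>c. a < c \<and> c \<le> b \<and> G (c - 1) \<le> y \<and> y < G c"
  using assms
proof (induction b)
  case (Suc b)
  show ?case
  proof (cases "G b \<le> y")
    case True
    then show ?thesis using Suc.prems by (intro exI[of _ "Suc b"]) auto
  next
    case False
    then have "a < b" using Suc.prems by (metis less_SucE not_le)
    then show ?thesis using Suc.IH Suc.prems False by (metis le_SucI not_le)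
  qed
qed simp

text \<open>If a \<open>k\<close>-step made a full turn, then at the first index \<open>c\<close> where \<open>G\<close> leaves \<open>G i\<close> the
  \<open>k\<close>-step from \<open>c\<close> is shorter than a turn, hence than \<open>r\<close>, which forces a single step
  \<open>G c - G (c - 1) > 1 - r \<ge> r\<close>.\<close>

lemma mono_lift_k_step:
  fixes G :: "nat \<Rightarrow> real"
  assumes "mono G" and period: "\<And>i. G (i + n) = G i + 1" and "0 < k" and "2 * k \<le> n"
    and "r \<le> 1/2" and unit_step: "\<And>i. G (Suc i) - G i < 1"
    and short: "\<And>i d. 1 \<le> d \<Longrightarrow> d \<le> k \<Longrightarrow> G (i + d) - G i < 1 \<Longrightarrow> G (i + d) - G i < r"
  shows "G (i + k) - G i < r"
proof (cases "G (i + k) - G i < 1")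
  case True
  then show ?thesis using short[of k i] \<open>0 < k\<close> by simp
next
  case False
  have "G (i + k) \<le> G (i + n)" using \<open>mono G\<close> \<open>2 * k \<le> n\<close> by (simp add: monoD)
  then have full: "G (i + k) = G i + 1" using False period[of i] by simp
  obtain c where c: "i < c" "c \<le> i + k" "G (c - 1) \<le> G i" "G i < G c"
    using nat_crossing[of i "i + k" G "G i"] \<open>0 < k\<close> full by auto
  have "G i \<le> G (c - 1)" using \<open>mono G\<close> c(1) by (simp add: monoD)
  then have before: "G (c - 1) = G i" using c(3) by simp
  have "G (i + k) \<le> G (c + k)" and "G (c + k) \<le> G (i + n)"
    using \<open>mono G\<close> c(1,2) \<open>2 * k \<le> n\<close> by (simp_all add: monoD)
  then have "G (c + k) = G i + 1" using full period[of i] by simp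
  then have "G (c + k) - G c < r" using short[of k c] \<open>0 < k\<close> c(4) by simp
  then have jump: "1 - r < G c - G (c - 1)" using before \<open>G (c + k) = G i + 1\<close> by simp
  have "Suc (c - 1) = c" using c(1) by simp
  then have "G (c - 1 + 1) - G (c - 1) < r" using short[of 1 "c - 1"] unit_step[of "c - 1"] \<open>0 < k\<close> by simp
  then show ?thesis using jump \<open>Suc (c - 1) = c\<close> \<open>r \<le> 1/2\<close> by simp
qed

text \<open>A lift to the universal cover \<open>\<real> \<rightarrow> S1\<close> of a walk through \<open>X\<close> that turns once every \<open>n\<close>
  steps.\<close>

definition winding_lift :: "nat \<Rightarrow> nat \<Rightarrow> real set \<Rightarrow> real \<Rightarrow> (nat \<Rightarrow> real) \<Rightarrow> bool" where
  "winding_lift n k X r G \<longleftrightarrow> mono G \<and> (\<forall>i. G (i + n) = G i + 1) \<and> (\<forall>i. G (i + k) - G i < r)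
     \<and> (\<forall>i. G (Suc i) - G i < 1) \<and> (\<forall>i. \<exists>x\<in>X. G i - x \<in> \<int>)"

lemma cyclic_hom_winding_lift:
  assumes hom: "cyclic_hom n k X r f" and "0 < k" and "2 * k < n"
    and "X \<subseteq> S1" and "0 < r" and "r < 1/2"
  shows "\<exists>G. winding_lift n k X r G"
proof -
  have "0 < n" using \<open>2 * k < n\<close> by simp
  have fX: "f i \<in> X" if "i < n" for i using hom that unfolding cyclic_hom_def by blast
  obtain \<rho> where "\<rho> < n" and min: "\<forall>i<n. f \<rho> \<le> f i"
    and start: "f ((\<rho> + (n - 1)) mod n) \<noteq> f \<rho>"
    using cyclic_hom_exists_arc_start[OF hom \<open>0 < k\<close> \<open>0 < n\<close>] .
  define g where "g i = f ((\<rho> + i) mod n)" for i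
  define G where "G = unroll n g"
  have g_mod: "g (i mod n) = g i" for i unfolding g_def by (simp add: mod_add_right_eq)
  have g_S1: "0 \<le> g i \<and> g i < 1" for i
    using fX[of "(\<rho> + i) mod n"] \<open>X \<subseteq> S1\<close> \<open>0 < n\<close> unfolding g_def S1_def by auto
  have g_mono: "g i \<le> g j" if "i \<le> j" "j < n" for i j
    unfolding g_def using cyclic_hom_mono_from_arc_start[OF hom \<open>X \<subseteq> S1\<close> \<open>\<rho> < n\<close> min start that] .
  have "g 0 = f \<rho>" using \<open>\<rho> < n\<close> unfolding g_def by simp
  moreover have "f \<rho> \<le> g (n - 1)" unfolding g_def using min \<open>0 < n\<close> by simp
  ultimately have "g 0 < g (n - 1)" using start unfolding g_def by (simp add: order_less_le)
  then have step: "G i \<le> G (Suc i) \<and> G (Suc i) - G i < 1" for i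
    unfolding G_def using unroll_Suc[OF \<open>0 < n\<close> g_mono] g_S1 by simp
  then have "mono G" by (intro incseq_SucI) simp
  have period: "G (i + n) = G i + 1" for i unfolding G_def by (rule unroll_add_period) fact
  have short: "G (i + d) - G i < r" if "1 \<le> d" "d \<le> k" "G (i + d) - G i < 1" for i d
  proof -
    have "0 \<le> G (i + d) - G i" using \<open>mono G\<close> by (simp add: monoD)
    then have "G (i + d) - G i = frac (G (i + d) - G i)" using that(3) by (simp add: frac_eq)
    also have "\<dots> = frac (g (i + d) - g i)"
      unfolding G_def frac_unroll_diff g_mod ..
    finally show ?thesis
      using cyclic_hom_frac_diff_lt[OF hom \<open>2 * k < n\<close> \<open>0 < r\<close> that(1,2), of "\<rho> + i"]
      unfolding g_def by (simp add: add.assoc mod_add_right_eq)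
  qed
  have "G (i + k) - G i < r" for i
    using mono_lift_k_step[OF \<open>mono G\<close> period \<open>0 < k\<close> _ _ _ short] \<open>2 * k < n\<close> \<open>r < 1/2\<close> step
    by simp
  moreover have "\<exists>x\<in>X. G i - x \<in> \<int>" for i
  proof
    show "g i \<in> X" using fX \<open>0 < n\<close> unfolding g_def by simp
    show "G i - g i \<in> \<int>" unfolding G_def unroll_def g_mod by simp
  qed
  ultimately show ?thesis
    unfolding winding_lift_def using \<open>mono G\<close> period step by blast
qed

lemma winding_lift_add_periods:
  assumes "winding_lift n k X r G"
  shows "G (i + j * n) = G i + real j"
proof (induction j)
  case (Suc j)
  have "G (i + Suc j * n) = G ((i + j * n) + n)" by (simp add: algebra_simps)
  then show ?case using Suc assms unfolding winding_lift_def by simp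
qed simp

lemma winding_lift_add_k_steps:
  assumes "winding_lift n k X r G" and "0 < j"
  shows "G (i + j * k) - G i < real j * r"
  using \<open>0 < j\<close>
proof (induction j rule: nat_induct_non_zero)
  case 1
  then show ?case using assms(1) unfolding winding_lift_def by simp
next
  case (Suc j)
  have "G (i + Suc j * k) = G ((i + j * k) + k)" by (simp add: algebra_simps)
  moreover have "G ((i + j * k) + k) - G (i + j * k) < r"
    using assms(1) unfolding winding_lift_def by blast
  ultimately show ?case using Suc.IH by (simp add: distrib_right)
qed

lemma winding_lift_step_lt:
  assumes "winding_lift n k X r G" and "l * n < (2 * l + 1) * k"
  shows "G (Suc v) - G v < (2 * real l + 1) * r - real l"
proof -
  have "Suc v + l * n \<le> v + (2 * l + 1) * k" using assms(2) by linarith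
  then have "G (Suc v + l * n) \<le> G (v + (2 * l + 1) * k)"
    using assms(1) unfolding winding_lift_def by (simp add: monoD)
  moreover have "G (Suc v + l * n) = G (Suc v) + real l"
    using winding_lift_add_periods[OF assms(1)] .
  moreover have "G (v + (2 * l + 1) * k) - G v < real (2 * l + 1) * r"
    using winding_lift_add_k_steps[OF assms(1), of "2 * l + 1" v] by simp
  ultimately show ?thesis by (simp add: algebra_simps)
qed

lemma winding_lift_crossing:
  assumes "winding_lift n k X r G"
  shows "\<exists>v m. G v \<le> y + of_int m \<and> y + of_int m < G (Suc v)"
proof -
  define m where "m = \<lceil>G 0 - y\<rceil>"
  have period: "G n = G 0 + 1" using assms unfolding winding_lift_def by (metis add_0)
  then have "0 < n" by (cases n) auto
  have "G 0 \<le> y + of_int m" "y + of_int m < G n"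
    using period ceiling_correct[of "G 0 - y"] unfolding m_def by linarith+
  then obtain c where "0 < c" "G (c - 1) \<le> y + of_int m" "y + of_int m < G c"
    using nat_crossing[OF \<open>0 < n\<close>] by blast
  then show ?thesis by (intro exI[of _ "c - 1"] exI[of _ m]) (simp add: Suc_diff_1)
qed

lemma winding_lift_is_covering:
  assumes lift: "winding_lift n k X r G" and gaps: "\<And>v. G (Suc v) - G v < 2 * \<epsilon>"
  shows "is_covering X \<epsilon>"
  unfolding is_covering_def
proof (rule ballI, rule ccontr)
  fix p
  assume "\<not> (\<exists>x\<in>X. arc_dist p x < \<epsilon>)"
  then have far: "\<epsilon> \<le> frac (x - p) \<and> \<epsilon> \<le> frac (p - x)" if "x \<in> X" for x
    using that unfolding arc_dist_def cw_dist_def by fastforce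
  obtain v m where below: "G v \<le> p + of_int m" and above: "p + of_int m < G (Suc v)"
    using winding_lift_crossing[OF lift] by blast
  have "G (Suc v) - G v < 1" using lift unfolding winding_lift_def by blast
  obtain x1 x2 where "x1 \<in> X" "G v - x1 \<in> \<int>" "x2 \<in> X" "G (Suc v) - x2 \<in> \<int>"
    using lift unfolding winding_lift_def by blast
  have "(p - x1) - (p + of_int m - G v) \<in> \<int>" and "(x2 - p) - (G (Suc v) - (p + of_int m)) \<in> \<int>"
    using Ints_diff[OF \<open>G v - x1 \<in> \<int>\<close> Ints_of_int[of m]]
      Ints_diff[OF Ints_of_int[of m] \<open>G (Suc v) - x2 \<in> \<int>\<close>]
    by (simp_all add: algebra_simps)
  then have "frac (p - x1) = p + of_int m - G v" and "frac (x2 - p) = G (Suc v) - (p + of_int m)"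
    using below above \<open>G (Suc v) - G v < 1\<close> by (simp_all add: frac_unique_iff)
  then have "2 * \<epsilon> \<le> G (Suc v) - G v" using far[OF \<open>x1 \<in> X\<close>] far[OF \<open>x2 \<in> X\<close>] by simp
  then show False using gaps[of v] by simp
qed

lemma wf_lt_gt_imp_cyclic_hom:
  assumes "0 \<le> c" and "c < wf_lt X r"
  shows "\<exists>n k f. 0 < n \<and> 2 * k < n \<and> cyclic_hom n k X r f \<and> c < real k / real n"
proof -
  have ne: "wf_ratios X r \<noteq> {}" using assms unfolding wf_lt_def by auto
  then have "c < Sup (wf_ratios X r)" using assms(2) unfolding wf_lt_def by simp
  then obtain y where "y \<in> wf_ratios X r" "c < y" using less_cSupD[OF ne] by blast
  then show ?thesis unfolding wf_ratios_def by blast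
qed

theorem proposition5p4:
  fixes l :: nat and r :: real and X :: "real set"
  assumes "real l / (2 * real l + 1) < r" and "r < 1/2"
    and "finite X" and "X \<subseteq> S1"
    and "wf_lt X r > real l / (2 * real l + 1)"
  shows "is_covering X ((real l + 1/2) * (r - real l / (2 * real l + 1)))"
proof -
  define c where "c = real l / (2 * real l + 1)"
  have "0 \<le> c" unfolding c_def by simp
  then obtain n k f where "0 < n" "2 * k < n" and hom: "cyclic_hom n k X r f"
    and "c < real k / real n"
    using wf_lt_gt_imp_cyclic_hom assms(5) unfolding c_def by blast
  then have "0 < k" using \<open>0 \<le> c\<close> by (cases k) auto
  have "real (l * n) < real ((2 * l + 1) * k)"
    using \<open>c < real k / real n\<close> \<open>0 < n\<close> unfolding c_def by (simp add: field_simps)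
  then have density: "l * n < (2 * l + 1) * k" by linarith
  obtain G where lift: "winding_lift n k X r G"
    using cyclic_hom_winding_lift[OF hom \<open>0 < k\<close> \<open>2 * k < n\<close> assms(4) _ assms(2)]
      assms(1) \<open>0 \<le> c\<close> unfolding c_def by fastforce
  have "(2 * real l + 1) * r - real l = 2 * ((real l + 1/2) * (r - c))"
    unfolding c_def by (simp add: field_simps)
  then show ?thesis
    using winding_lift_is_covering[OF lift] winding_lift_step_lt[OF lift density]
    unfolding c_def by simp
qed

end
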